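(* Every weakly CIS graph is $\cap$-weakly triangle.
   Context: A family $\mathcal C$ of maximal cliques is edge covering if every two adjacent vertices lie in a common member; a family $\mathcal S$ of maximal stable sets is non-edge covering if every two distinct non-adjacent vertices lie in a common member. A graph is weakly CIS if there are an edge covering family $\mathcal C$ of maximal cliques and a non-edge covering family $\mathcal S$ of maximal stable sets with $C\cap S\neq\emptyset$ for all $C\in\mathcal C$, $S\in\mathcal S$. A graph $G$ is weakly triangle if there is a non-edge covering family $\mathcal S$ of maximal stable sets of $G$ such that for every $S\in\mathcal S$ and every pair of adjacent vertices $u,v\in V(G)\setminus S$, $u$ and $v$ have a common neighbor in $S$. A graph is $\cap$-weakly triangle if both it and its complement are weakly triangle. *)

theory Defs
  imports Main
begin

definition graph :: "'a set \<Rightarrow> ('a \<Rightarrow> 'a \<Rightarrow> bool) \<Rightarrow> bool" where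
  "graph V E \<longleftrightarrow> finite V \<and> (\<forall>u v. E u v \<longrightarrow> u \<in> V \<and> v \<in> V \<and> u \<noteq> v \<and> E v u)"

definition compl_graph :: "'a set \<Rightarrow> ('a \<Rightarrow> 'a \<Rightarrow> bool) \<Rightarrow> 'a \<Rightarrow> 'a \<Rightarrow> bool" where
  "compl_graph V E u v \<longleftrightarrow> u \<in> V \<and> v \<in> V \<and> u \<noteq> v \<and> \<not> E u v"

definition clique :: "'a set \<Rightarrow> ('a \<Rightarrow> 'a \<Rightarrow> bool) \<Rightarrow> 'a set \<Rightarrow> bool" where
  "clique V E C \<longleftrightarrow> C \<subseteq> V \<and> (\<forall>u\<in>C. \<forall>v\<in>C. u \<noteq> v \<longrightarrow> E u v)"

definition stable :: "'a set \<Rightarrow> ('a \<Rightarrow> 'a \<Rightarrow> bool) \<Rightarrow> 'a set \<Rightarrow> bool" where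
  "stable V E S \<longleftrightarrow> S \<subseteq> V \<and> (\<forall>u\<in>S. \<forall>v\<in>S. \<not> E u v)"

definition max_clique :: "'a set \<Rightarrow> ('a \<Rightarrow> 'a \<Rightarrow> bool) \<Rightarrow> 'a set \<Rightarrow> bool" where
  "max_clique V E C \<longleftrightarrow> clique V E C \<and> (\<forall>D. clique V E D \<and> C \<subseteq> D \<longrightarrow> D = C)"

definition max_stable :: "'a set \<Rightarrow> ('a \<Rightarrow> 'a \<Rightarrow> bool) \<Rightarrow> 'a set \<Rightarrow> bool" where
  "max_stable V E S \<longleftrightarrow> stable V E S \<and> (\<forall>T. stable V E T \<and> S \<subseteq> T \<longrightarrow> T = S)"

definition edge_covering :: "'a set \<Rightarrow> ('a \<Rightarrow> 'a \<Rightarrow> bool) \<Rightarrow> 'a set set \<Rightarrow> bool" where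
  "edge_covering V E \<C> \<longleftrightarrow> (\<forall>C\<in>\<C>. max_clique V E C) \<and>
     (\<forall>u v. E u v \<longrightarrow> (\<exists>C\<in>\<C>. u \<in> C \<and> v \<in> C))"

definition non_edge_covering :: "'a set \<Rightarrow> ('a \<Rightarrow> 'a \<Rightarrow> bool) \<Rightarrow> 'a set set \<Rightarrow> bool" where
  "non_edge_covering V E \<S> \<longleftrightarrow> (\<forall>S\<in>\<S>. max_stable V E S) \<and>
     (\<forall>u\<in>V. \<forall>v\<in>V. u \<noteq> v \<and> \<not> E u v \<longrightarrow> (\<exists>S\<in>\<S>. u \<in> S \<and> v \<in> S))"

definition weakly_CIS :: "'a set \<Rightarrow> ('a \<Rightarrow> 'a \<Rightarrow> bool) \<Rightarrow> bool" where
  "weakly_CIS V E \<longleftrightarrow> (\<exists>\<C> \<S>. edge_covering V E \<C> \<and> non_edge_covering V E \<S> \<and>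
     (\<forall>C\<in>\<C>. \<forall>S\<in>\<S>. C \<inter> S \<noteq> {}))"

definition weakly_triangle :: "'a set \<Rightarrow> ('a \<Rightarrow> 'a \<Rightarrow> bool) \<Rightarrow> bool" where
  "weakly_triangle V E \<longleftrightarrow> (\<exists>\<S>. non_edge_covering V E \<S> \<and>
     (\<forall>S\<in>\<S>. \<forall>u\<in>V - S. \<forall>v\<in>V - S. E u v \<longrightarrow> (\<exists>w\<in>S. E u w \<and> E v w)))"

definition cap_weakly_triangle :: "'a set \<Rightarrow> ('a \<Rightarrow> 'a \<Rightarrow> bool) \<Rightarrow> bool" where
  "cap_weakly_triangle V E \<longleftrightarrow> weakly_triangle V E \<and> weakly_triangle V (compl_graph V E)"

end

theory Submission
  imports Defs
begin

text \<open>If \<open>\<C>\<close> and \<open>\<S>\<close> witness that a graph is weakly CIS, then \<open>\<S>\<close> witnesses that it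
  is weakly triangle: an edge \<open>uv\<close> outside \<open>S \<in> \<S>\<close> lies in some \<open>C \<in> \<C>\<close>, and any
  vertex of \<open>C \<inter> S\<close> is a common neighbour of \<open>u\<close> and \<open>v\<close>. Complementation swaps
  maximal cliques and maximal stable sets, so \<open>(\<S>, \<C>)\<close> witnesses that the complement
  is weakly CIS as well, and the same argument applies to it.\<close>

lemma stable_compl_graph_iff_clique:
  "stable V (compl_graph V E) C \<longleftrightarrow> clique V E C"
  unfolding stable_def clique_def compl_graph_def by blast

lemma clique_compl_graph_iff_stable:
  assumes "graph V E"
  shows "clique V (compl_graph V E) S \<longleftrightarrow> stable V E S"
  using assms unfolding clique_def stable_def compl_graph_def graph_def by blast

lemma max_stable_compl_graph_iff_max_clique:
  "max_stable V (compl_graph V E) C \<longleftrightarrow> max_clique V E C"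
  unfolding max_stable_def max_clique_def stable_compl_graph_iff_clique by blast

lemma max_clique_compl_graph_iff_max_stable:
  assumes "graph V E"
  shows "max_clique V (compl_graph V E) S \<longleftrightarrow> max_stable V E S"
  unfolding max_clique_def max_stable_def clique_compl_graph_iff_stable[OF assms] by blast

lemma edge_covering_compl_graph_iff:
  assumes "graph V E"
  shows "edge_covering V (compl_graph V E) \<S> \<longleftrightarrow> non_edge_covering V E \<S>"
  unfolding edge_covering_def non_edge_covering_def
    max_clique_compl_graph_iff_max_stable[OF assms]
  by (auto simp: compl_graph_def)

lemma non_edge_covering_compl_graph_iff:
  assumes "graph V E"
  shows "non_edge_covering V (compl_graph V E) \<C> \<longleftrightarrow> edge_covering V E \<C>"
  unfolding edge_covering_def non_edge_covering_def max_stable_compl_graph_iff_max_clique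
  using assms by (auto simp: compl_graph_def graph_def)

lemma weakly_CIS_compl_graph:
  assumes "graph V E" and "weakly_CIS V E"
  shows "weakly_CIS V (compl_graph V E)"
proof -
  obtain \<C> \<S> where "edge_covering V E \<C>" "non_edge_covering V E \<S>"
    and "\<forall>C\<in>\<C>. \<forall>S\<in>\<S>. C \<inter> S \<noteq> {}"
    using assms(2) unfolding weakly_CIS_def by blast
  then show ?thesis
    unfolding weakly_CIS_def edge_covering_compl_graph_iff[OF assms(1)]
      non_edge_covering_compl_graph_iff[OF assms(1)]
    by blast
qed

lemma weakly_CIS_imp_weakly_triangle:
  assumes "weakly_CIS V E"
  shows "weakly_triangle V E"
proof -
  obtain \<C> \<S> where ec: "edge_covering V E \<C>" and ne: "non_edge_covering V E \<S>"
    and meet: "\<forall>C\<in>\<C>. \<forall>S\<in>\<S>. C \<inter> S \<noteq> {}"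
    using assms unfolding weakly_CIS_def by blast
  have "\<exists>w\<in>S. E u w \<and> E v w"
    if S: "S \<in> \<S>" and u: "u \<in> V - S" and v: "v \<in> V - S" and "E u v" for S u v
  proof -
    obtain C where C: "C \<in> \<C>" "u \<in> C" "v \<in> C"
      using ec \<open>E u v\<close> unfolding edge_covering_def by blast
    then obtain w where w: "w \<in> C" "w \<in> S"
      using meet S by blast
    have "clique V E C"
      using ec C unfolding edge_covering_def max_clique_def by blast
    moreover have "w \<noteq> u" "w \<noteq> v"
      using u v w by auto
    ultimately have "E u w" "E v w"
      using w C unfolding clique_def by auto
    with w show ?thesis by blast
  qed
  with ne show ?thesis
    unfolding weakly_triangle_def by (intro exI[of _ \<S>]) auto
qed

theorem proposition20:
  fixes V :: "'a set" and E :: "'a \<Rightarrow> 'a \<Rightarrow> bool"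
  assumes "graph V E"
    and "weakly_CIS V E"
  shows "cap_weakly_triangle V E"
  unfolding cap_weakly_triangle_def
  using assms(2) weakly_CIS_compl_graph[OF assms]
  by (intro conjI weakly_CIS_imp_weakly_triangle)

end
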